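(* Let $\alpha>0$, $\beta_m>\alpha$, $\tau=1/(\beta_m-\alpha)$ and $$\beta(t)=\alpha+\frac{2t/\tau^2}{1+t^2/\tau^2}.$$ Let $S_0>0$, $I_0>0$ and let $(S(t),I(t),R(t))$ be the solution of $$\dot S=-\frac{\beta(t)SI}{S+I},\qquad \dot I=\frac{\beta(t)SI}{S+I}-\alpha I,\qquad \dot R=\alpha I$$ with $S(0)=S_0$, $I(0)=I_0$. Writing $k=\sqrt{\frac{I_0}{S_0+I_0}}$, for $t\ge 0$, $$S(t)=S_0\left(\frac{S_0+I_0}{S_0+I_0(1+t^2/\tau^2)}\right)\exp\left[\alpha\,\frac{S_0}{S_0+I_0}\,\frac{\arctan(k\,t/\tau)}{k/\tau}\right]e^{-\alpha t},$$ $$I(t)=I_0\left(1+\frac{t^2}{\tau^2}\right)\left(\frac{S_0+I_0}{S_0+I_0(1+t^2/\tau^2)}\right)\exp\left[\alpha\,\frac{S_0}{S_0+I_0}\,\frac{\arctan(k\,t/\tau)}{k/\tau}\right]e^{-\alpha t}.$$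
   Context: Modified SIR epidemiological model with constant recovery rate $\alpha$ and time-dependent transmission rate $\beta(t)$, here having its maximum value $\beta_m$ at $t=\tau$. *)

theory Defs
  imports "HOL-Analysis.Analysis"
begin

end

theory Submission
  imports Defs
begin

(* Since beta = alpha + g'/g with g t = 1 + t^2/tau^2, the ratio I/(g S) is a first integral,
   so I = (I0/S0) g S as long as S and I stay positive.  The S-equation then becomes the linear
   equation S' = - beta I0 g/(S0 + I0 g) S, whose coefficient has an explicit antiderivative;
   the arctan comes from integrating alpha S0/(S0 + I0 g).  Positivity on all of [0, oo) follows
   by continuation: at a first time where S or I vanished, the closed form, which is positive,
   would still hold by continuity. *)

lemma eq_on_halfline_by_continuation:
  fixes u v :: "real \<Rightarrow> 'a::real_normed_vector" and U :: "'a set"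
  assumes "open U"
    and "continuous_on {0..} u" "continuous_on {0..} v"
    and "u 0 = v 0" "\<And>x. x \<ge> 0 \<Longrightarrow> v x \<in> U"
    and agree: "\<And>T. T > 0 \<Longrightarrow> (\<forall>x\<in>{0..<T}. u x \<in> U) \<Longrightarrow> \<forall>x\<in>{0..<T}. u x = v x"
    and "x \<ge> 0"
  shows "u x = v x"
proof -
  define B where "B = {0..} \<inter> u -` (- U)"
  have "B = {}"
  proof (rule ccontr)
    assume "B \<noteq> {}"
    moreover have "bdd_below B" unfolding B_def by (auto intro: bdd_belowI[of _ 0])
    moreover have "closed B"
      unfolding B_def using assms(1,2) by (intro continuous_closed_preimage) auto
    ultimately have "Inf B \<in> B" by (rule closed_contains_Inf)
    define T where "T = Inf B"
    have "T \<in> B" unfolding T_def by fact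
    moreover have "u 0 \<in> U" using assms(4,5) by simp
    ultimately have "T > 0" unfolding B_def by (cases "T = 0") auto
    have "u x \<in> U" if "x \<in> {0..<T}" for x
    proof (rule ccontr)
      assume "u x \<notin> U"
      then have "x \<in> B" using that unfolding B_def by simp
      then have "T \<le> x" unfolding T_def using \<open>bdd_below B\<close> by (rule cInf_lower)
      with that show False by simp
    qed
    then have agree_below: "u x - v x = 0" if "x \<in> {0..<T}" for x
      using agree[OF \<open>T > 0\<close>] that by simp
    have closure_eq: "closure {0..<T} = {0..T}" using \<open>T > 0\<close> by simp
    have "u T - v T = 0"
    proof (rule continuous_constant_on_closure[where S = "{0..<T}"])
      have "{0..T} \<subseteq> {0..}" by auto
      then show "continuous_on (closure {0..<T}) (\<lambda>x. u x - v x)" unfolding closure_eq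
        by (intro continuous_on_diff continuous_on_subset[OF assms(2)] continuous_on_subset[OF assms(3)])
      show "T \<in> closure {0..<T}" unfolding closure_eq using \<open>T > 0\<close> by simp
    qed (fact agree_below)
    with \<open>T \<in> B\<close> assms(5) show False unfolding B_def by auto
  qed
  then have "\<forall>y\<in>{0..<x+1}. u y \<in> U"
    unfolding B_def by (metis Compl_iff IntI atLeastLessThan_iff atLeast_iff vimageI empty_iff)
  then show ?thesis using agree[of "x+1"] \<open>x \<ge> 0\<close> by simp
qed

lemma linear_ode_solution:
  fixes a A y :: "real \<Rightarrow> real"
  assumes "convex C"
    and y': "\<And>x. x \<in> C \<Longrightarrow> (y has_real_derivative a x * y x) (at x within C)"
    and A': "\<And>x. x \<in> C \<Longrightarrow> (A has_real_derivative a x) (at x within C)"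
    and "x \<in> C" "x0 \<in> C"
  shows "y x = y x0 * exp (A x - A x0)"
proof -
  have "\<exists>c. \<forall>x\<in>C. y x * exp (- A x) = c"
  proof (rule has_field_derivative_zero_constant[OF \<open>convex C\<close>])
    fix x assume "x \<in> C"
    from DERIV_mult[OF y'[OF this] DERIV_exp[THEN DERIV_chain2, OF DERIV_minus[OF A'[OF this]]]]
    show "((\<lambda>x. y x * exp (- A x)) has_real_derivative 0) (at x within C)"
      by (simp add: algebra_simps)
  qed
  then have "y x * exp (- A x) = y x0 * exp (- A x0)" using assms(4,5) by metis
  then show ?thesis by (simp add: exp_diff exp_minus field_simps)
qed

lemma sir_ratio_constant:
  fixes \<alpha> :: real and \<beta> g S I :: "real \<Rightarrow> real"
  assumes "convex C"
    and pos: "\<And>x. x \<in> C \<Longrightarrow> S x > 0 \<and> I x > 0 \<and> g x > 0"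
    and S': "\<And>x. x \<in> C \<Longrightarrow>
       (S has_real_derivative (- (\<beta> x * S x * I x / (S x + I x)))) (at x within C)"
    and I': "\<And>x. x \<in> C \<Longrightarrow>
       (I has_real_derivative (\<beta> x * S x * I x / (S x + I x) - \<alpha> * I x)) (at x within C)"
    and g': "\<And>x. x \<in> C \<Longrightarrow> (g has_real_derivative (\<beta> x - \<alpha>) * g x) (at x within C)"
    and "x \<in> C" "y \<in> C"
  shows "I x / (S x * g x) = I y / (S y * g y)"
proof -
  have "\<exists>c. \<forall>x\<in>C. I x / (S x * g x) = c"
  proof (rule has_field_derivative_zero_constant[OF \<open>convex C\<close>])
    fix x assume x: "x \<in> C"
    have "S x + I x \<noteq> 0" "S x * g x \<noteq> 0" using pos[OF x] by auto
    from DERIV_divide[OF I'[OF x] DERIV_mult[OF S'[OF x] g'[OF x]], OF this(2)] this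
    show "((\<lambda>x. I x / (S x * g x)) has_real_derivative 0) (at x within C)"
      by (simp add: field_simps)
  qed
  then show ?thesis using assms(6,7) by metis
qed

lemma sir_closed_form_while_positive:
  fixes \<alpha> S0 I0 :: real and \<beta> g E S I :: "real \<Rightarrow> real"
  assumes "convex C" "0 \<in> C"
    and init: "S 0 = S0" "I 0 = I0" "g 0 = 1" "E 0 = 0"
    and pos: "\<And>x. x \<in> C \<Longrightarrow> S x > 0 \<and> I x > 0 \<and> g x > 0"
    and S': "\<And>x. x \<in> C \<Longrightarrow>
       (S has_real_derivative (- (\<beta> x * S x * I x / (S x + I x)))) (at x within C)"
    and I': "\<And>x. x \<in> C \<Longrightarrow>
       (I has_real_derivative (\<beta> x * S x * I x / (S x + I x) - \<alpha> * I x)) (at x within C)"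
    and g': "\<And>x. x \<in> C \<Longrightarrow> (g has_real_derivative (\<beta> x - \<alpha>) * g x) (at x within C)"
    and E': "\<And>x. x \<in> C \<Longrightarrow>
       (E has_real_derivative - (\<beta> x * I0 * g x / (S0 + I0 * g x))) (at x within C)"
    and "x \<in> C"
  shows "S x = S0 * exp (E x) \<and> I x = I0 * g x * exp (E x)"
proof -
  have "S0 > 0" "I0 > 0" using pos[OF \<open>0 \<in> C\<close>] init by auto
  have I_eq: "I x = I0 / S0 * g x * S x" if "x \<in> C" for x
    using sir_ratio_constant[OF \<open>convex C\<close> pos S' I' g' that \<open>0 \<in> C\<close>] pos[OF that] init
    by (simp add: field_simps)
  have "(S has_real_derivative - (\<beta> x * I0 * g x / (S0 + I0 * g x)) * S x) (at x within C)"
    if "x \<in> C" for x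
  proof -
    define P where "P = S0 + I0 * g x"
    have "P > 0"
      unfolding P_def using pos[OF that] \<open>S0 > 0\<close> \<open>I0 > 0\<close> by (intro add_pos_pos) auto
    have "S x + I x = P * S x / S0"
      unfolding I_eq[OF that] P_def using \<open>S0 > 0\<close> by (simp add: field_simps)
    then have "\<beta> x * S x * I x / (S x + I x) = \<beta> x * S x * (I0 / S0 * g x * S x) * S0 / (P * S x)"
      using I_eq[OF that] by simp
    also have "\<dots> = \<beta> x * I0 * g x / P * S x"
      using pos[OF that] \<open>S0 > 0\<close> \<open>P > 0\<close> by (simp add: field_simps)
    finally have infection_rate:
      "\<beta> x * S x * I x / (S x + I x) = \<beta> x * I0 * g x / (S0 + I0 * g x) * S x"
      unfolding P_def .
    show ?thesis using S'[OF that] unfolding infection_rate minus_mult_left .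
  qed
  from linear_ode_solution[OF \<open>convex C\<close> this E' \<open>x \<in> C\<close> \<open>0 \<in> C\<close>]
  have "S x = S0 * exp (E x)" using init by simp
  with I_eq[OF \<open>x \<in> C\<close>] \<open>S0 > 0\<close> show ?thesis by simp
qed

lemma sir_closed_form:
  fixes \<alpha> S0 I0 :: real and \<beta> g E S I :: "real \<Rightarrow> real"
  assumes "S0 > 0" "I0 > 0"
    and init: "S 0 = S0" "I 0 = I0" "g 0 = 1" "E 0 = 0"
    and g_pos: "\<And>x. x \<ge> 0 \<Longrightarrow> g x > 0"
    and S': "\<And>x. x \<ge> 0 \<Longrightarrow>
       (S has_real_derivative (- (\<beta> x * S x * I x / (S x + I x)))) (at x within {0..})"
    and I': "\<And>x. x \<ge> 0 \<Longrightarrow>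
       (I has_real_derivative (\<beta> x * S x * I x / (S x + I x) - \<alpha> * I x)) (at x within {0..})"
    and g': "\<And>x. x \<ge> 0 \<Longrightarrow> (g has_real_derivative (\<beta> x - \<alpha>) * g x) (at x within {0..})"
    and E': "\<And>x. x \<ge> 0 \<Longrightarrow>
       (E has_real_derivative - (\<beta> x * I0 * g x / (S0 + I0 * g x))) (at x within {0..})"
    and "t \<ge> 0"
  shows "S t = S0 * exp (E t) \<and> I t = I0 * g t * exp (E t)"
proof -
  let ?U = "{0<..} \<times> {0<..} :: (real \<times> real) set"
  have "(S t, I t) = (S0 * exp (E t), I0 * g t * exp (E t))"
  proof (rule eq_on_halfline_by_continuation[where U = ?U and u = "\<lambda>x. (S x, I x)"
        and v = "\<lambda>x. (S0 * exp (E x), I0 * g x * exp (E x))"])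
    show "continuous_on {0..} (\<lambda>x. (S x, I x))"
      using S' I' by (intro continuous_on_Pair DERIV_continuous_on) auto
    show "continuous_on {0..} (\<lambda>x. (S0 * exp (E x), I0 * g x * exp (E x)))"
      using g' E' by (intro continuous_intros DERIV_continuous_on) auto
    show "(S0 * exp (E x), I0 * g x * exp (E x)) \<in> ?U" if "x \<ge> 0" for x
      using g_pos[OF that] \<open>S0 > 0\<close> \<open>I0 > 0\<close> by simp
    show "\<forall>x\<in>{0..<T}. (S x, I x) = (S0 * exp (E x), I0 * g x * exp (E x))"
      if "T > 0" "\<forall>x\<in>{0..<T}. (S x, I x) \<in> ?U" for T
    proof
      fix x assume "x \<in> {0..<T}"
      have sub: "{0..<T} \<subseteq> {0..}" by auto
      have "S x = S0 * exp (E x) \<and> I x = I0 * g x * exp (E x)"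
      proof (rule sir_closed_form_while_positive[where C = "{0..<T}" and \<beta> = \<beta> and \<alpha> = \<alpha>
            and S = S and I = I and g = g and E = E])
        show "S y > 0 \<and> I y > 0 \<and> g y > 0" if "y \<in> {0..<T}" for y
          using that \<open>\<forall>x\<in>{0..<T}. (S x, I x) \<in> ?U\<close> g_pos by auto
      qed (use that \<open>x \<in> {0..<T}\<close> in \<open>auto simp: init
            intro: has_field_derivative_subset[OF S' sub] has_field_derivative_subset[OF I' sub]
              has_field_derivative_subset[OF g' sub] has_field_derivative_subset[OF E' sub]\<close>)
      then show "(S x, I x) = (S0 * exp (E x), I0 * g x * exp (E x))" by simp
    qed
  qed (use init \<open>t \<ge> 0\<close> in \<open>auto intro: open_Times\<close>)
  then show ?thesis by simp
qed

lemma sir_arctan_exponent_has_derivative: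
  fixes \<alpha> \<tau> S0 I0 k x :: real
  assumes "\<tau> \<noteq> 0" "S0 > 0" "I0 > 0" "k\<^sup>2 = I0 / (S0 + I0)"
  defines "g \<equiv> \<lambda>x. 1 + x\<^sup>2 / \<tau>\<^sup>2"
  shows "((\<lambda>x. ln ((S0 + I0) / (S0 + I0 * g x))
              + \<alpha> * (S0 / (S0 + I0)) * (arctan (k * x / \<tau>) / (k / \<tau>)) - \<alpha> * x)
          has_real_derivative - ((\<alpha> + (2 * x / \<tau>\<^sup>2) / g x) * I0 * g x / (S0 + I0 * g x)))
         (at x within X)"
proof -
  have "g x > 0" unfolding g_def by (simp add: add_pos_nonneg)
  define P where "P = S0 + I0 * g x"
  have "P > 0" unfolding P_def using \<open>g x > 0\<close> assms(2,3) by (simp add: add_pos_pos)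
  have "k \<noteq> 0" using assms(2-4) by auto
  have "S0 + I0 > 0" using assms(2,3) by simp
  have "1 + (k * x / \<tau>)\<^sup>2 = 1 + I0 / (S0 + I0) * (x\<^sup>2 / \<tau>\<^sup>2)"
    by (simp add: power_divide power_mult_distrib assms(4))
  also have "\<dots> = P / (S0 + I0)"
  proof -
    have "1 + I0 / (S0 + I0) * y = (S0 + I0 * (1 + y)) / (S0 + I0)" for y
      using \<open>S0 + I0 > 0\<close> by (simp add: field_simps)
    then show ?thesis unfolding P_def g_def by blast
  qed
  finally have arctan_denom: "1 + (k * x / \<tau>)\<^sup>2 = P / (S0 + I0)" .
  have g': "(g has_real_derivative 2 * x / \<tau>\<^sup>2) (at x within X)"
    unfolding g_def using assms(1) by (auto intro!: derivative_eq_intros simp: power2_eq_square)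
  have "((\<lambda>x. ln ((S0 + I0) / (S0 + I0 * g x))
              + \<alpha> * (S0 / (S0 + I0)) * (arctan (k * x / \<tau>) / (k / \<tau>)) - \<alpha> * x)
          has_real_derivative - (I0 * (2 * x / \<tau>\<^sup>2)) / P + \<alpha> * S0 / P - \<alpha>) (at x within X)"
    using assms(1-3) \<open>k \<noteq> 0\<close> \<open>P > 0\<close>
    by (intro derivative_eq_intros g'[THEN DERIV_cong]) (auto simp: arctan_denom P_def)
  moreover have "- (I0 * (2 * x / \<tau>\<^sup>2)) / P + \<alpha> * S0 / P - \<alpha>
      = - ((\<alpha> + (2 * x / \<tau>\<^sup>2) / g x) * I0 * g x / P)"
  proof -
    have S0_eq: "S0 = P - I0 * g x" unfolding P_def by simp
    show ?thesis unfolding S0_eq using \<open>g x > 0\<close> \<open>P > 0\<close> by (simp add: field_simps)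
  qed
  ultimately show ?thesis unfolding P_def by simp
qed

theorem mainTheorem6:
  fixes \<alpha> \<beta>m \<tau> S0 I0 :: real
    and \<beta> S I R :: "real \<Rightarrow> real"
  assumes h_alpha: "\<alpha> > 0"
    and h_betam: "\<beta>m > \<alpha>"
    and h_tau: "\<tau> = 1 / (\<beta>m - \<alpha>)"
    and h_beta: "\<And>t. \<beta> t = \<alpha> + (2 * t / \<tau>^2) / (1 + t^2 / \<tau>^2)"
    and h_S0: "S0 > 0" and h_I0: "I0 > 0"
    and h_init: "S 0 = S0" "I 0 = I0"
    and h_S: "\<And>t. t \<ge> 0 \<Longrightarrow>
       (S has_real_derivative (- (\<beta> t * S t * I t / (S t + I t)))) (at t within {0..})"
    and h_I: "\<And>t. t \<ge> 0 \<Longrightarrow>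
       (I has_real_derivative (\<beta> t * S t * I t / (S t + I t) - \<alpha> * I t)) (at t within {0..})"
    and h_R: "\<And>t. t \<ge> 0 \<Longrightarrow>
       (R has_real_derivative (\<alpha> * I t)) (at t within {0..})"
  shows "\<forall>t\<ge>0.
    (let k = sqrt (I0 / (S0 + I0));
         F = ((S0 + I0) / (S0 + I0 * (1 + t^2 / \<tau>^2)))
             * exp (\<alpha> * (S0 / (S0 + I0)) * (arctan (k * t / \<tau>) / (k / \<tau>)))
             * exp (- \<alpha> * t)
     in S t = S0 * F \<and> I t = I0 * (1 + t^2 / \<tau>^2) * F)"
proof (intro allI impI)
  fix t :: real assume "t \<ge> 0"
  have "\<tau> \<noteq> 0" using h_tau h_betam by simp
  define k where "k = sqrt (I0 / (S0 + I0))"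
  have k2: "k\<^sup>2 = I0 / (S0 + I0)" unfolding k_def using h_S0 h_I0 by simp
  define g where "g = (\<lambda>x::real. 1 + x\<^sup>2 / \<tau>\<^sup>2)"
  define E where "E = (\<lambda>x. ln ((S0 + I0) / (S0 + I0 * g x))
    + \<alpha> * (S0 / (S0 + I0)) * (arctan (k * x / \<tau>) / (k / \<tau>)) - \<alpha> * x)"
  have g_pos: "g x > 0" for x unfolding g_def by (simp add: add_pos_nonneg)
  have g': "(g has_real_derivative (\<beta> x - \<alpha>) * g x) (at x within X)" for x X
  proof -
    have "(g has_real_derivative 2 * x / \<tau>\<^sup>2) (at x within X)"
      unfolding g_def using \<open>\<tau> \<noteq> 0\<close> by (auto intro!: derivative_eq_intros simp: power2_eq_square)
    moreover have "(\<beta> x - \<alpha>) * g x = 2 * x / \<tau>\<^sup>2"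
      using g_pos[of x] unfolding h_beta g_def by simp
    ultimately show ?thesis by simp
  qed
  have E': "(E has_real_derivative - (\<beta> x * I0 * g x / (S0 + I0 * g x))) (at x within X)" for x X
    using sir_arctan_exponent_has_derivative[OF \<open>\<tau> \<noteq> 0\<close> h_S0 h_I0 k2, of \<alpha> x X]
    unfolding E_def g_def h_beta by simp
  have "S t = S0 * exp (E t) \<and> I t = I0 * g t * exp (E t)"
    by (rule sir_closed_form[OF h_S0 h_I0 h_init _ _ g_pos h_S h_I g' E' \<open>t \<ge> 0\<close>])
      (simp_all add: g_def E_def)
  moreover have "exp (E t) = (S0 + I0) / (S0 + I0 * g t)
      * exp (\<alpha> * (S0 / (S0 + I0)) * (arctan (k * t / \<tau>) / (k / \<tau>))) * exp (- \<alpha> * t)"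
    using g_pos[of t] h_S0 h_I0 unfolding E_def
    by (simp add: exp_add exp_diff exp_minus add_pos_pos field_simps)
  ultimately show "let k = sqrt (I0 / (S0 + I0));
         F = ((S0 + I0) / (S0 + I0 * (1 + t^2 / \<tau>^2)))
             * exp (\<alpha> * (S0 / (S0 + I0)) * (arctan (k * t / \<tau>) / (k / \<tau>)))
             * exp (- \<alpha> * t)
     in S t = S0 * F \<and> I t = I0 * (1 + t^2 / \<tau>^2) * F"
    unfolding Let_def k_def[symmetric] g_def by simp
qed

end
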